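(* (Completeness.) If $t\in SN_{d\beta}$, then $t$ is typable in $\cap J$, i.e. there exist an environment $\Gamma$ and a type $\sigma$ such that $\Gamma\vdash t:\sigma$ is derivable.
   Context: Terms $\mathtt T_J$: $t,u,r ::= x \mid \lambda x.t \mid t(u,y.r)$ ($y$ bound in $r$), up to $\alpha$-equivalence; $\{u/x\}t$ capture-avoiding substitution. List contexts $\mathtt D ::= \Diamond \mid t(u,y.\mathtt D)$. Distant beta: $\mathtt D\langle\lambda x.t\rangle(u,y.r) \mapsto_{d\beta} \{\{u/x\}\mathtt D\langle t\rangle/y\}r$ (variables bound by $\mathtt D$ not free in $u$, $x$ not in $\mathtt D$), $\to_{d\beta}$ its closure under all contexts; $SN_{d\beta}$ the set of terms with no infinite $\to_{d\beta}$-sequence. System $\cap J$: types $\sigma,\tau ::= \alpha \mid \mathcal M\to\sigma$, $\mathcal M=[\sigma_i]_{i\in I}$ a finite possibly empty multiset; $\sqcup$ multiset union; environments map variables to multisets, $\wedge$ pointwise union, $\Gamma;x:\mathcal M$ extension with $x\notin\mathrm{dom}\,\Gamma$. $\mathrm{ch}(\mathcal M)=\mathcal M$ if $\mathcal M\ne[\,]$, $\mathrm{ch}([\,])=[\tau]$ for an arbitrary $\tau$. Rules: (var) $x:[\sigma]\vdash x:\sigma$; (abs) from $\Gamma;x:\mathcal M\vdash t:\sigma$ infer $\Gamma\vdash\lambda x.t:\mathcal M\to\sigma$; (many) from $(\Gamma_i\vdash t:\sigma_i)_{i\in I}$, $I\ne\emptyset$, infer $\wedge_i\Gamma_i\vdash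 t:[\sigma_i]_{i\in I}$; (app) from $\Gamma\vdash t:\mathrm{ch}([\mathcal M_i\to\tau_i]_{i\in I})$, $\Delta\vdash u:\mathrm{ch}(\sqcup_i\mathcal M_i)$, $\Lambda;y:[\tau_i]_{i\in I}\vdash r:\sigma$ infer $\Gamma\wedge\Delta\wedge\Lambda\vdash t(u,y.r):\sigma$. *)

theory Defs
  imports Main "HOL-Library.Multiset"
begin

text \<open>Var i is a de Bruijn index; Lam t binds index 0 in t;
  App t u r represents t(u,y.r), where y is bound (index 0) in r.\<close>

datatype trm = Var nat | Lam trm | App trm trm trm

fun shift :: "nat \<Rightarrow> nat \<Rightarrow> trm \<Rightarrow> trm" where
  "shift n k (Var i) = (if i < k then Var i else Var (i + n))"
| "shift n k (Lam t) = Lam (shift n (Suc k) t)"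
| "shift n k (App t u r) = App (shift n k t) (shift n k u) (shift n (Suc k) r)"

text \<open>subst t k s: capture-avoiding substitution of s for index k in t
  (indices above k are decremented, since the binder of k disappears).\<close>
fun subst :: "trm \<Rightarrow> nat \<Rightarrow> trm \<Rightarrow> trm" where
  "subst (Var i) k s = (if i < k then Var i else if i = k then s else Var (i - 1))"
| "subst (Lam t) k s = Lam (subst t (Suc k) (shift 1 0 s))"
| "subst (App t u r) k s = App (subst t k s) (subst u k s) (subst r (Suc k) (shift 1 0 s))"

datatype lctx = Hole | LApp trm trm lctx

fun plug :: "lctx \<Rightarrow> trm \<Rightarrow> trm" where
  "plug Hole s = s"
| "plug (LApp t u D) s = App t u (plug D s)"

fun depth :: "lctx \<Rightarrow> nat" where
  "depth Hole = 0"
| "depth (LApp t u D) = Suc (depth D)"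

text \<open>D<\<lambda>x.t>(u,y.r) \<mapsto> {{u/x}D<t>/y}r.  In de Bruijn form, u must be shifted
  under the depth D binders of D before being substituted for x.\<close>
inductive dbeta :: "trm \<Rightarrow> trm \<Rightarrow> bool" where
  root: "dbeta (App (plug D (Lam t)) u r)
               (subst r 0 (plug D (subst t 0 (shift (depth D) 0 u))))"
| lam: "dbeta t t' \<Longrightarrow> dbeta (Lam t) (Lam t')"
| app1: "dbeta t t' \<Longrightarrow> dbeta (App t u r) (App t' u r)"
| app2: "dbeta u u' \<Longrightarrow> dbeta (App t u r) (App t u' r)"
| app3: "dbeta r r' \<Longrightarrow> dbeta (App t u r) (App t u r')"

definition SN_dbeta :: "trm \<Rightarrow> bool" where
  "SN_dbeta t \<longleftrightarrow> \<not> (\<exists>f. f 0 = t \<and> (\<forall>i. dbeta (f i) (f (Suc i))))"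

datatype ty = TAtom nat | Arr "ty multiset" ty

type_synonym env = "nat \<Rightarrow> ty multiset"

text \<open>Gamma; x:M for the bound index 0 (the de Bruijn extension; x is fresh by construction).\<close>
definition econs :: "ty multiset \<Rightarrow> env \<Rightarrow> env" where
  "econs M \<Gamma> = (\<lambda>n. case n of 0 \<Rightarrow> M | Suc k \<Rightarrow> \<Gamma> k)"

definition ch_rel :: "ty multiset \<Rightarrow> ty multiset \<Rightarrow> bool" where
  "ch_rel M N \<longleftrightarrow> (M \<noteq> {#} \<and> N = M) \<or> (M = {#} \<and> (\<exists>\<tau>. N = {#\<tau>#}))"

inductive has_type :: "env \<Rightarrow> trm \<Rightarrow> ty \<Rightarrow> bool"
  and has_mtype :: "env \<Rightarrow> trm \<Rightarrow> ty multiset \<Rightarrow> bool" where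
  var: "has_type ((\<lambda>_. {#})(x := {#\<sigma>#})) (Var x) \<sigma>"
| abs: "has_type (econs M \<Gamma>) t \<sigma> \<Longrightarrow> has_type \<Gamma> (Lam t) (Arr M \<sigma>)"
| many: "\<lbrakk> finite (I :: nat set); I \<noteq> {}; \<forall>i\<in>I. has_type (\<Gamma>s i) t (\<sigma>s i) \<rbrakk>
         \<Longrightarrow> has_mtype (\<lambda>x. \<Sum>i\<in>I. \<Gamma>s i x) t (\<Sum>i\<in>I. {#\<sigma>s i#})"
| app: "\<lbrakk> finite (I :: nat set);
          ch_rel (\<Sum>i\<in>I. {#Arr (Ms i) (\<tau>s i)#}) A; has_mtype \<Gamma> t A;
          ch_rel (\<Sum>i\<in>I. Ms i) B; has_mtype \<Delta> u B;
          has_type (econs (\<Sum>i\<in>I. {#\<tau>s i#}) \<Lambda>) r \<sigma> \<rbrakk>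
        \<Longrightarrow> has_type (\<lambda>x. \<Gamma> x + \<Delta> x + \<Lambda> x) (App t u r) \<sigma>"

end

(*
  Strongly normalising terms are typable, by well-founded induction along "reduct or strict
  subterm" (well-founded on SN terms because reduction steps lift through subterms). The
  invariant is: t is typable, and if t is neutral (no reduct of t has the form D\<langle>\<lambda>x.s\<rangle>) then
  t is typable at every type.

  For t(u,y.r) with a neutral head, t is typed with [] \<rightarrow> \<tau> for each type \<tau> that r needs for
  y, so u only has to be typable at some type. Otherwise t(u,y.r) has a "safe" step: one that
  contracts a redex whose abstraction and argument are typable, or that lies in r below a
  neutral (hence flexible) head; typability is pulled back along safe steps. This subject
  expansion rests on anti-substitution: a typing of {v/x}r splits into a typing of r with
  x : M plus a multi-typing of v at M, where M may be empty.
*)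
theory Submission
  imports Defs "HOL-Library.Function_Algebras"
begin

lemma sum_fun_apply: "(\<Sum>i\<in>I. f i) x = (\<Sum>i\<in>I. f i x)"
  by (induction I rule: infinite_finite_induct) auto

lemma sum_singletons_eq_image_mset: "(\<Sum>i\<in>I. {#f i#}) = image_mset f (mset_set I)"
  by (simp add: sum_unfold_sum_mset)

lemma mset_indexedE: obtains I :: "nat set" and p where "finite I" "A = image_mset p (mset_set I)"
proof -
  obtain xs where "mset xs = A" using ex_mset by blast
  then have "A = image_mset (nth xs) (mset_set {0..<length xs})"
    by (metis map_nth mset_map mset_upt)
  then show thesis using that by blast
qed

section \<open>Multi-typings\<close>

inductive mtyped :: "env \<Rightarrow> trm \<Rightarrow> ty multiset \<Rightarrow> bool" where
  mtyped_empty: "mtyped 0 t {#}"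
| mtyped_single: "has_type \<Gamma> t \<sigma> \<Longrightarrow> mtyped \<Gamma> t {#\<sigma>#}"
| mtyped_add: "mtyped \<Gamma>\<^sub>1 t A\<^sub>1 \<Longrightarrow> mtyped \<Gamma>\<^sub>2 t A\<^sub>2 \<Longrightarrow> mtyped (\<Gamma>\<^sub>1 + \<Gamma>\<^sub>2) t (A\<^sub>1 + A\<^sub>2)"

lemma mtyped_sum:
  "finite I \<Longrightarrow> \<forall>i\<in>I. has_type (\<Gamma>s i) t (\<sigma>s i) \<Longrightarrow> mtyped (\<Sum>i\<in>I. \<Gamma>s i) t (\<Sum>i\<in>I. {#\<sigma>s i#})"
proof (induction I rule: finite_induct)
  case (insert i I)
  then have "mtyped (\<Gamma>s i + (\<Sum>i\<in>I. \<Gamma>s i)) t ({#\<sigma>s i#} + (\<Sum>i\<in>I. {#\<sigma>s i#}))"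
    by (intro mtyped_add mtyped_single) simp_all
  then show ?case
    unfolding sum.insert[OF insert.hyps] .
qed (simp add: mtyped_empty)

lemma mtyped_pairs:
  assumes "mtyped \<Gamma> t A"
  obtains P where "\<forall>(\<Delta>, \<sigma>)\<in>#P. has_type \<Delta> t \<sigma>"
    "\<Gamma> = sum_mset (image_mset fst P)" "A = image_mset snd P"
proof -
  from assms have "\<exists>P. (\<forall>(\<Delta>, \<sigma>)\<in>#P. has_type \<Delta> t \<sigma>)
    \<and> \<Gamma> = sum_mset (image_mset fst P) \<and> A = image_mset snd P"
  proof (induction rule: mtyped.induct)
    case (mtyped_empty t)
    show ?case by (rule exI[of _ "{#}"]) simp
  next
    case (mtyped_single \<Gamma> t \<sigma>)
    then show ?case by (intro exI[of _ "{#(\<Gamma>, \<sigma>)#}"]) simp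
  next
    case (mtyped_add \<Gamma>\<^sub>1 t A\<^sub>1 \<Gamma>\<^sub>2 A\<^sub>2)
    then obtain P\<^sub>1 P\<^sub>2 where "\<forall>(\<Delta>, \<sigma>)\<in>#P\<^sub>1 + P\<^sub>2. has_type \<Delta> t \<sigma>"
      "\<Gamma>\<^sub>1 + \<Gamma>\<^sub>2 = sum_mset (image_mset fst (P\<^sub>1 + P\<^sub>2))" "A\<^sub>1 + A\<^sub>2 = image_mset snd (P\<^sub>1 + P\<^sub>2)"
      by (metis image_mset_union sum_mset.union union_iff)
    then show ?case by blast
  qed
  then show thesis using that by blast
qed

lemma has_mtype_iff_mtyped: "has_mtype \<Gamma> t A \<longleftrightarrow> mtyped \<Gamma> t A \<and> A \<noteq> {#}"
proof
  assume "has_mtype \<Gamma> t A"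
  then show "mtyped \<Gamma> t A \<and> A \<noteq> {#}"
  proof cases
    case (many I \<Gamma>s \<sigma>s)
    have "(\<lambda>x. \<Sum>i\<in>I. \<Gamma>s i x) = (\<Sum>i\<in>I. \<Gamma>s i)"
      by (simp add: fun_eq_iff sum_fun_apply)
    then show ?thesis
      using many mtyped_sum[of I \<Gamma>s t \<sigma>s]
      by (simp add: sum_singletons_eq_image_mset mset_set_empty_iff)
  qed
next
  assume "mtyped \<Gamma> t A \<and> A \<noteq> {#}"
  then obtain P where P: "\<forall>(\<Delta>, \<sigma>)\<in>#P. has_type \<Delta> t \<sigma>" "\<Gamma> = sum_mset (image_mset fst P)"
      "A = image_mset snd P" "P \<noteq> {#}"
    by (auto elim: mtyped_pairs)
  obtain I :: "nat set" and p where I: "finite I" "P = image_mset p (mset_set I)"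
    by (rule mset_indexedE[of P])
  have "I \<noteq> {}" using P(4) I by auto
  moreover have "\<forall>i\<in>I. has_type (fst (p i)) t (snd (p i))"
    using P(1) I by (auto simp: case_prod_beta)
  ultimately have "has_mtype (\<lambda>x. \<Sum>i\<in>I. fst (p i) x) t (\<Sum>i\<in>I. {#snd (p i)#})"
    using I(1) by (intro many)
  moreover have "\<Gamma> = (\<Sum>i\<in>I. fst (p i))"
    using P(2) I by (simp add: sum_unfold_sum_mset multiset.map_comp o_def)
  then have "(\<lambda>x. \<Sum>i\<in>I. fst (p i) x) = \<Gamma>"
    by (simp add: fun_eq_iff sum_fun_apply)
  ultimately show "has_mtype \<Gamma> t A"
    using P(3) I by (simp add: sum_singletons_eq_image_mset multiset.map_comp o_def)
qed

lemma mtyped_singleD: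
  assumes "mtyped \<Gamma> t {#\<sigma>#}"
  shows "has_type \<Gamma> t \<sigma>"
proof -
  obtain P where P: "\<forall>(\<Delta>, \<sigma>)\<in>#P. has_type \<Delta> t \<sigma>" "\<Gamma> = sum_mset (image_mset fst P)"
      "image_mset snd P = {#\<sigma>#}"
    using assms by (metis mtyped_pairs)
  then obtain \<Delta> where "P = {#(\<Delta>, \<sigma>)#}" by (auto dest!: msed_map_invR)
  then show ?thesis using P by simp
qed

definition has_ch_type :: "env \<Rightarrow> trm \<Rightarrow> ty multiset \<Rightarrow> bool" where
  "has_ch_type \<Gamma> t M \<longleftrightarrow> (\<exists>A. ch_rel M A \<and> has_mtype \<Gamma> t A)"

lemma has_ch_type_iff:
  "has_ch_type \<Gamma> t M \<longleftrightarrow> (if M = {#} then \<exists>\<tau>. has_type \<Gamma> t \<tau> else mtyped \<Gamma> t M)"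
  unfolding has_ch_type_def ch_rel_def has_mtype_iff_mtyped
  by (auto intro: mtyped_single dest: mtyped_singleD)

lemma has_type_Var_iff: "has_type \<Gamma> (Var x) \<sigma> \<longleftrightarrow> \<Gamma> = (\<lambda>_. {#})(x := {#\<sigma>#})"
  by (auto elim: has_type.cases intro: has_type_has_mtype.var)

lemma has_type_Lam_iff: "has_type \<Gamma> (Lam t) \<tau> \<longleftrightarrow> (\<exists>M \<sigma>. \<tau> = Arr M \<sigma> \<and> has_type (econs M \<Gamma>) t \<sigma>)"
  by (auto elim: has_type.cases intro: has_type_has_mtype.abs)

lemma has_type_App_iff:
  "has_type \<Gamma> (App t u r) \<sigma> \<longleftrightarrow>
    (\<exists>P \<Gamma>\<^sub>t \<Gamma>\<^sub>u \<Gamma>\<^sub>r. has_ch_type \<Gamma>\<^sub>t t (image_mset (case_prod Arr) P)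
      \<and> has_ch_type \<Gamma>\<^sub>u u (sum_mset (image_mset fst P))
      \<and> has_type (econs (image_mset snd P) \<Gamma>\<^sub>r) r \<sigma> \<and> \<Gamma> = \<Gamma>\<^sub>t + \<Gamma>\<^sub>u + \<Gamma>\<^sub>r)"
  (is "_ \<longleftrightarrow> (\<exists>P \<Gamma>\<^sub>t \<Gamma>\<^sub>u \<Gamma>\<^sub>r. ?app P \<Gamma>\<^sub>t \<Gamma>\<^sub>u \<Gamma>\<^sub>r)")
proof
  assume "has_type \<Gamma> (App t u r) \<sigma>"
  then show "\<exists>P \<Gamma>\<^sub>t \<Gamma>\<^sub>u \<Gamma>\<^sub>r. ?app P \<Gamma>\<^sub>t \<Gamma>\<^sub>u \<Gamma>\<^sub>r"
  proof cases
    case (app I Ms \<tau>s A \<Gamma>\<^sub>t B \<Gamma>\<^sub>u \<Gamma>\<^sub>r)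
    then have "?app (image_mset (\<lambda>i. (Ms i, \<tau>s i)) (mset_set I)) \<Gamma>\<^sub>t \<Gamma>\<^sub>u \<Gamma>\<^sub>r"
      unfolding has_ch_type_def
      by (auto simp: sum_singletons_eq_image_mset sum_unfold_sum_mset fun_eq_iff
          multiset.map_comp o_def)
    then show ?thesis by blast
  qed
next
  assume "\<exists>P \<Gamma>\<^sub>t \<Gamma>\<^sub>u \<Gamma>\<^sub>r. ?app P \<Gamma>\<^sub>t \<Gamma>\<^sub>u \<Gamma>\<^sub>r"
  then obtain P \<Gamma>\<^sub>t \<Gamma>\<^sub>u \<Gamma>\<^sub>r where "?app P \<Gamma>\<^sub>t \<Gamma>\<^sub>u \<Gamma>\<^sub>r" by blast
  moreover obtain I :: "nat set" and p where "finite I" "P = image_mset p (mset_set I)"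
    by (rule mset_indexedE[of P])
  ultimately show "has_type \<Gamma> (App t u r) \<sigma>"
    using app[of I "\<lambda>i. fst (p i)" "\<lambda>i. snd (p i)" _ \<Gamma>\<^sub>t t _ \<Gamma>\<^sub>u u \<Gamma>\<^sub>r r \<sigma>]
    unfolding has_ch_type_def
    by (auto simp: sum_singletons_eq_image_mset sum_unfold_sum_mset plus_fun_def case_prod_beta
        multiset.map_comp o_def)
qed

lemma has_type_AppE:
  assumes "has_type \<Gamma> (App t u r) \<sigma>"
  obtains P \<Gamma>\<^sub>t \<Gamma>\<^sub>u \<Gamma>\<^sub>r where "has_ch_type \<Gamma>\<^sub>t t (image_mset (case_prod Arr) P)"
    "has_ch_type \<Gamma>\<^sub>u u (sum_mset (image_mset fst P))"
    "has_type (econs (image_mset snd P) \<Gamma>\<^sub>r) r \<sigma>" "\<Gamma> = \<Gamma>\<^sub>t + \<Gamma>\<^sub>u + \<Gamma>\<^sub>r"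
  using assms unfolding has_type_App_iff by blast

lemma has_type_AppI:
  "has_ch_type \<Gamma>\<^sub>t t (image_mset (case_prod Arr) P) \<Longrightarrow>
   has_ch_type \<Gamma>\<^sub>u u (sum_mset (image_mset fst P)) \<Longrightarrow>
   has_type (econs (image_mset snd P) \<Gamma>\<^sub>r) r \<sigma> \<Longrightarrow>
   has_type (\<Gamma>\<^sub>t + \<Gamma>\<^sub>u + \<Gamma>\<^sub>r) (App t u r) \<sigma>"
  unfolding has_type_App_iff by blast

lemma mtyped_transfer:
  assumes "mtyped \<Gamma> w A"
    and typed: "\<And>\<Gamma> \<sigma>. has_type \<Gamma> w \<sigma> \<Longrightarrow> \<exists>\<Gamma>'. R \<Gamma> \<Gamma>' \<and> has_type \<Gamma>' t \<sigma>"
    and zero: "R 0 0"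
    and add: "\<And>\<Gamma>\<^sub>1 \<Gamma>\<^sub>2 \<Gamma>\<^sub>1' \<Gamma>\<^sub>2'. R \<Gamma>\<^sub>1 \<Gamma>\<^sub>1' \<Longrightarrow> R \<Gamma>\<^sub>2 \<Gamma>\<^sub>2' \<Longrightarrow> R (\<Gamma>\<^sub>1 + \<Gamma>\<^sub>2) (\<Gamma>\<^sub>1' + \<Gamma>\<^sub>2')"
  shows "\<exists>\<Gamma>'. R \<Gamma> \<Gamma>' \<and> mtyped \<Gamma>' t A"
proof -
  have "w' = w \<Longrightarrow> \<exists>\<Gamma>'. R \<Gamma> \<Gamma>' \<and> mtyped \<Gamma>' t A" if "mtyped \<Gamma> w' A" for w'
    using that
  proof (induction rule: mtyped.induct)
    case mtyped_empty
    then show ?case using zero mtyped.mtyped_empty by blast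
  next
    case mtyped_single
    then show ?case using typed mtyped.mtyped_single by blast
  next
    case mtyped_add
    then show ?case using add mtyped.mtyped_add by blast
  qed
  then show ?thesis using assms(1) by blast
qed

lemma has_ch_type_transfer:
  assumes "has_ch_type \<Gamma> w M"
    and typed: "\<And>\<Gamma> \<sigma>. has_type \<Gamma> w \<sigma> \<Longrightarrow> \<exists>\<Gamma>'. R \<Gamma> \<Gamma>' \<and> has_type \<Gamma>' t \<sigma>"
    and "R 0 0"
    and "\<And>\<Gamma>\<^sub>1 \<Gamma>\<^sub>2 \<Gamma>\<^sub>1' \<Gamma>\<^sub>2'. R \<Gamma>\<^sub>1 \<Gamma>\<^sub>1' \<Longrightarrow> R \<Gamma>\<^sub>2 \<Gamma>\<^sub>2' \<Longrightarrow> R (\<Gamma>\<^sub>1 + \<Gamma>\<^sub>2) (\<Gamma>\<^sub>1' + \<Gamma>\<^sub>2')"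
  shows "\<exists>\<Gamma>'. R \<Gamma> \<Gamma>' \<and> has_ch_type \<Gamma>' t M"
proof (cases "M = {#}")
  case True
  then show ?thesis using assms(1) typed unfolding has_ch_type_iff by (metis (full_types))
next
  case False
  then have "mtyped \<Gamma> w M" using assms(1) unfolding has_ch_type_iff by simp
  then show ?thesis using mtyped_transfer[OF _ assms(2-4)] False unfolding has_ch_type_iff by simp
qed

section \<open>Strengthening and anti-substitution\<close>

definition env_ins :: "nat \<Rightarrow> ty multiset \<Rightarrow> env \<Rightarrow> env" where
  "env_ins k M \<Gamma> = (\<lambda>n. if n < k then \<Gamma> n else if n = k then M else \<Gamma> (n - 1))"

definition env_del :: "nat \<Rightarrow> env \<Rightarrow> env" where
  "env_del k \<Gamma> = (\<lambda>n. if n < k then \<Gamma> n else \<Gamma> (Suc n))"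

lemma econs_0 [simp]: "econs M \<Gamma> 0 = M"
  and econs_Suc [simp]: "econs M \<Gamma> (Suc k) = \<Gamma> k"
  by (simp_all add: econs_def)

lemma env_ins_0: "env_ins 0 M \<Gamma> = econs M \<Gamma>"
  by (auto simp: env_ins_def econs_def fun_eq_iff split: nat.split)

lemma env_ins_Suc: "env_ins (Suc k) M \<Gamma> = econs (\<Gamma> 0) (env_ins k M (env_del 0 \<Gamma>))"
  by (auto simp: env_ins_def env_del_def econs_def fun_eq_iff split: nat.split)

lemma env_ins_add: "env_ins k (M\<^sub>1 + M\<^sub>2) (\<Gamma>\<^sub>1 + \<Gamma>\<^sub>2) = env_ins k M\<^sub>1 \<Gamma>\<^sub>1 + env_ins k M\<^sub>2 \<Gamma>\<^sub>2"
  by (auto simp: env_ins_def fun_eq_iff)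

lemma env_ins_zero: "env_ins k {#} 0 = 0"
  by (auto simp: env_ins_def fun_eq_iff)

lemma env_del_add: "env_del k (\<Gamma>\<^sub>1 + \<Gamma>\<^sub>2) = env_del k \<Gamma>\<^sub>1 + env_del k \<Gamma>\<^sub>2"
  by (auto simp: env_del_def fun_eq_iff)

lemma env_del_zero: "env_del k 0 = 0"
  by (auto simp: env_del_def fun_eq_iff)

lemma env_del_Suc_econs: "env_del (Suc k) (econs M \<Gamma>) = econs M (env_del k \<Gamma>)"
  by (auto simp: env_del_def econs_def fun_eq_iff split: nat.split)

lemma env_del_0_econs: "env_del 0 (econs M \<Gamma>) = \<Gamma>"
  by (auto simp: env_del_def econs_def fun_eq_iff)

lemma econs_env_del_0: "econs (\<Gamma> 0) (env_del 0 \<Gamma>) = \<Gamma>"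
  by (auto simp: env_del_def econs_def fun_eq_iff split: nat.split)

lemma econs_eq_addD:
  assumes "econs M \<Gamma> = \<Gamma>\<^sub>1 + \<Gamma>\<^sub>2" "\<Gamma>\<^sub>2 0 = {#}"
  shows "\<Gamma>\<^sub>1 0 = M" "\<Gamma> = env_del 0 \<Gamma>\<^sub>1 + env_del 0 \<Gamma>\<^sub>2"
proof -
  show "\<Gamma>\<^sub>1 0 = M" using fun_cong[OF assms(1), of 0] assms(2) by simp
  show "\<Gamma> = env_del 0 \<Gamma>\<^sub>1 + env_del 0 \<Gamma>\<^sub>2"
    using arg_cong[OF assms(1), of "env_del 0"] by (simp only: env_del_0_econs env_del_add)
qed

lemma has_type_shiftD: "has_type \<Gamma> (shift 1 k v) \<sigma> \<Longrightarrow> \<Gamma> k = {#} \<and> has_type (env_del k \<Gamma>) v \<sigma>"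
proof (induction v arbitrary: k \<Gamma> \<sigma>)
  case (Var i)
  then have "\<Gamma> = (\<lambda>_. {#})((if i < k then i else Suc i) := {#\<sigma>#})"
    by (simp add: has_type_Var_iff split: if_splits)
  then have "\<Gamma> k = {#}" "env_del k \<Gamma> = (\<lambda>_. {#})(i := {#\<sigma>#})"
    by (auto simp: env_del_def fun_eq_iff)
  then show ?case by (metis has_type_has_mtype.var)
next
  case (Lam t)
  then obtain M \<tau> where \<sigma>: "\<sigma> = Arr M \<tau>" and "has_type (econs M \<Gamma>) (shift 1 (Suc k) t) \<tau>"
    by (auto simp: has_type_Lam_iff)
  from Lam.IH[OF this(2)] have "\<Gamma> k = {#}" "has_type (econs M (env_del k \<Gamma>)) t \<tau>"
    by (simp_all add: env_del_Suc_econs)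
  then show ?case by (simp add: \<sigma> has_type_Lam_iff)
next
  case (App t u r)
  let ?R = "\<lambda>\<Gamma> \<Gamma>'. \<Gamma> k = {#} \<and> \<Gamma>' = env_del k \<Gamma>"
  have R_add: "?R (\<Gamma>\<^sub>1 + \<Gamma>\<^sub>2) (\<Gamma>\<^sub>1' + \<Gamma>\<^sub>2')" if "?R \<Gamma>\<^sub>1 \<Gamma>\<^sub>1'" "?R \<Gamma>\<^sub>2 \<Gamma>\<^sub>2'" for \<Gamma>\<^sub>1 \<Gamma>\<^sub>2 \<Gamma>\<^sub>1' \<Gamma>\<^sub>2'
    using that by (simp add: env_del_add)
  have R_zero: "?R 0 0" by (simp add: env_del_zero)
  obtain P \<Gamma>\<^sub>t \<Gamma>\<^sub>u \<Gamma>\<^sub>r where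
    t: "has_ch_type \<Gamma>\<^sub>t (shift 1 k t) (image_mset (case_prod Arr) P)" and
    u: "has_ch_type \<Gamma>\<^sub>u (shift 1 k u) (sum_mset (image_mset fst P))" and
    r: "has_type (econs (image_mset snd P) \<Gamma>\<^sub>r) (shift 1 (Suc k) r) \<sigma>" and
    \<Gamma>: "\<Gamma> = \<Gamma>\<^sub>t + \<Gamma>\<^sub>u + \<Gamma>\<^sub>r"
    using App.prems by (auto elim: has_type_AppE)
  have "\<exists>\<Gamma>'. ?R \<Gamma>\<^sub>t \<Gamma>' \<and> has_ch_type \<Gamma>' t (image_mset (case_prod Arr) P)"
    by (rule has_ch_type_transfer[where R = ?R, OF t _ R_zero R_add]) (use App.IH(1) in blast)
  moreover have "\<exists>\<Gamma>'. ?R \<Gamma>\<^sub>u \<Gamma>' \<and> has_ch_type \<Gamma>' u (sum_mset (image_mset fst P))"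
    by (rule has_ch_type_transfer[where R = ?R, OF u _ R_zero R_add]) (use App.IH(2) in blast)
  moreover have "\<Gamma>\<^sub>r k = {#}" "has_type (econs (image_mset snd P) (env_del k \<Gamma>\<^sub>r)) r \<sigma>"
    using App.IH(3)[OF r] by (simp_all add: env_del_Suc_econs)
  ultimately have "(\<Gamma>\<^sub>t + \<Gamma>\<^sub>u + \<Gamma>\<^sub>r) k = {#}"
    and "has_type (env_del k \<Gamma>\<^sub>t + env_del k \<Gamma>\<^sub>u + env_del k \<Gamma>\<^sub>r) (App t u r) \<sigma>"
    by (simp, blast intro: has_type_AppI)
  then show ?case unfolding \<Gamma> env_del_add by blast
qed

lemma mtyped_shiftD: "mtyped \<Gamma> (shift 1 k v) A \<Longrightarrow> \<Gamma> k = {#} \<and> mtyped (env_del k \<Gamma>) v A"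
  using mtyped_transfer[where R = "\<lambda>\<Gamma> \<Gamma>'. \<Gamma> k = {#} \<and> \<Gamma>' = env_del k \<Gamma>"] has_type_shiftD
  by (fastforce simp: env_del_add env_del_zero)

lemma has_type_subst_VarD:
  assumes "has_type \<Gamma> (subst (Var i) k v) \<sigma>"
  shows "\<exists>\<Gamma>\<^sub>r M \<Delta>. has_type (env_ins k M \<Gamma>\<^sub>r) (Var i) \<sigma> \<and> \<Gamma> = \<Gamma>\<^sub>r + \<Delta> \<and> mtyped \<Delta> v M"
proof (cases "i = k")
  case True
  have "env_ins k {#\<sigma>#} 0 = (\<lambda>_. {#})(k := {#\<sigma>#})"
    by (auto simp: env_ins_def fun_eq_iff)
  then have "has_type (env_ins k {#\<sigma>#} 0) (Var i) \<sigma>"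
    using True by (metis has_type_has_mtype.var)
  moreover have "mtyped \<Gamma> v {#\<sigma>#}"
    using assms True by (simp add: mtyped_single)
  ultimately show ?thesis by (metis add_0)
next
  case False
  then have "has_type (env_ins k {#} \<Gamma>) (Var i) \<sigma>"
    using assms by (auto simp: has_type_Var_iff env_ins_def fun_eq_iff split: if_splits)
  moreover have "\<Gamma> = \<Gamma> + 0" by simp
  ultimately show ?thesis using mtyped_empty by blast
qed

lemma has_type_subst_binderD:
  assumes "has_type (env_ins (Suc k) M \<Gamma>\<^sub>r) r \<sigma>" "econs N \<Gamma> = \<Gamma>\<^sub>r + \<Delta>" "mtyped \<Delta> (shift 1 0 v) M"
  shows "has_type (econs N (env_ins k M (env_del 0 \<Gamma>\<^sub>r))) r \<sigma>"
    "\<Gamma> = env_del 0 \<Gamma>\<^sub>r + env_del 0 \<Delta>" "mtyped (env_del 0 \<Delta>) v M"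
proof -
  from mtyped_shiftD[OF assms(3)] have "\<Delta> 0 = {#}" "mtyped (env_del 0 \<Delta>) v M" by simp_all
  with econs_eq_addD[OF assms(2)] assms(1)
  show "has_type (econs N (env_ins k M (env_del 0 \<Gamma>\<^sub>r))) r \<sigma>"
    "\<Gamma> = env_del 0 \<Gamma>\<^sub>r + env_del 0 \<Delta>" "mtyped (env_del 0 \<Delta>) v M"
    by (simp_all add: env_ins_Suc)
qed

definition subst_split :: "nat \<Rightarrow> trm \<Rightarrow> env \<Rightarrow> env \<Rightarrow> bool" where
  "subst_split k v \<Gamma> \<Gamma>' \<longleftrightarrow> (\<exists>\<Gamma>\<^sub>r M \<Delta>. \<Gamma>' = env_ins k M \<Gamma>\<^sub>r \<and> \<Gamma> = \<Gamma>\<^sub>r + \<Delta> \<and> mtyped \<Delta> v M)"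

lemma subst_split_zero: "subst_split k v 0 0"
  unfolding subst_split_def
proof (intro exI conjI)
  show "0 = env_ins k {#} 0" by (simp only: env_ins_zero)
  show "(0::env) = 0 + 0" by simp
qed (rule mtyped_empty)

lemma subst_split_add:
  assumes "subst_split k v \<Gamma>\<^sub>1 \<Gamma>\<^sub>1'" "subst_split k v \<Gamma>\<^sub>2 \<Gamma>\<^sub>2'"
  shows "subst_split k v (\<Gamma>\<^sub>1 + \<Gamma>\<^sub>2) (\<Gamma>\<^sub>1' + \<Gamma>\<^sub>2')"
proof -
  obtain \<Gamma>\<^sub>r\<^sub>1 M\<^sub>1 \<Delta>\<^sub>1 \<Gamma>\<^sub>r\<^sub>2 M\<^sub>2 \<Delta>\<^sub>2 where
    "\<Gamma>\<^sub>1' = env_ins k M\<^sub>1 \<Gamma>\<^sub>r\<^sub>1" "\<Gamma>\<^sub>1 = \<Gamma>\<^sub>r\<^sub>1 + \<Delta>\<^sub>1" "mtyped \<Delta>\<^sub>1 v M\<^sub>1"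
    "\<Gamma>\<^sub>2' = env_ins k M\<^sub>2 \<Gamma>\<^sub>r\<^sub>2" "\<Gamma>\<^sub>2 = \<Gamma>\<^sub>r\<^sub>2 + \<Delta>\<^sub>2" "mtyped \<Delta>\<^sub>2 v M\<^sub>2"
    using assms unfolding subst_split_def by blast
  then have "\<Gamma>\<^sub>1' + \<Gamma>\<^sub>2' = env_ins k (M\<^sub>1 + M\<^sub>2) (\<Gamma>\<^sub>r\<^sub>1 + \<Gamma>\<^sub>r\<^sub>2)"
    "\<Gamma>\<^sub>1 + \<Gamma>\<^sub>2 = (\<Gamma>\<^sub>r\<^sub>1 + \<Gamma>\<^sub>r\<^sub>2) + (\<Delta>\<^sub>1 + \<Delta>\<^sub>2)" "mtyped (\<Delta>\<^sub>1 + \<Delta>\<^sub>2) v (M\<^sub>1 + M\<^sub>2)"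
    by (simp_all only: env_ins_add ac_simps mtyped_add)
  then show ?thesis unfolding subst_split_def by blast
qed

lemma has_type_substD:
  "has_type \<Gamma> (subst r k v) \<sigma> \<Longrightarrow>
   \<exists>\<Gamma>\<^sub>r M \<Delta>. has_type (env_ins k M \<Gamma>\<^sub>r) r \<sigma> \<and> \<Gamma> = \<Gamma>\<^sub>r + \<Delta> \<and> mtyped \<Delta> v M"
proof (induction r arbitrary: k v \<Gamma> \<sigma>)
  case (Var i)
  then show ?case by (rule has_type_subst_VarD)
next
  case (Lam t)
  then obtain M' \<tau> where \<sigma>: "\<sigma> = Arr M' \<tau>"
    and "has_type (econs M' \<Gamma>) (subst t (Suc k) (shift 1 0 v)) \<tau>"
    by (auto simp: has_type_Lam_iff)
  with Lam.IH obtain \<Gamma>\<^sub>r M \<Delta> where "has_type (env_ins (Suc k) M \<Gamma>\<^sub>r) t \<tau>"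
    and "econs M' \<Gamma> = \<Gamma>\<^sub>r + \<Delta>" and "mtyped \<Delta> (shift 1 0 v) M"
    by blast
  note body = has_type_subst_binderD[OF this]
  from body(1) have "has_type (env_ins k M (env_del 0 \<Gamma>\<^sub>r)) (Lam t) \<sigma>"
    by (simp add: \<sigma> has_type_Lam_iff)
  with body(2,3) show ?case by blast
next
  case (App t u r)
  obtain P \<Gamma>\<^sub>t \<Gamma>\<^sub>u \<Gamma>\<^sub>r where
    t: "has_ch_type \<Gamma>\<^sub>t (subst t k v) (image_mset (case_prod Arr) P)" and
    u: "has_ch_type \<Gamma>\<^sub>u (subst u k v) (sum_mset (image_mset fst P))" and
    r: "has_type (econs (image_mset snd P) \<Gamma>\<^sub>r) (subst r (Suc k) (shift 1 0 v)) \<sigma>" and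
    \<Gamma>: "\<Gamma> = \<Gamma>\<^sub>t + \<Gamma>\<^sub>u + \<Gamma>\<^sub>r"
    using App.prems by (auto elim: has_type_AppE)
  have "\<exists>\<Gamma>'. subst_split k v \<Gamma>\<^sub>t \<Gamma>' \<and> has_ch_type \<Gamma>' t (image_mset (case_prod Arr) P)"
  proof (rule has_ch_type_transfer[where R = "subst_split k v",
        OF t _ subst_split_zero subst_split_add])
    fix \<Gamma>' \<tau> assume "has_type \<Gamma>' (subst t k v) \<tau>"
    from App.IH(1)[OF this] show "\<exists>\<Gamma>''. subst_split k v \<Gamma>' \<Gamma>'' \<and> has_type \<Gamma>'' t \<tau>"
      unfolding subst_split_def by blast
  qed
  then obtain \<Gamma>\<^sub>t' M\<^sub>t \<Delta>\<^sub>t where t':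
    "has_ch_type (env_ins k M\<^sub>t \<Gamma>\<^sub>t') t (image_mset (case_prod Arr) P)"
    "\<Gamma>\<^sub>t = \<Gamma>\<^sub>t' + \<Delta>\<^sub>t" "mtyped \<Delta>\<^sub>t v M\<^sub>t"
    unfolding subst_split_def by blast
  have "\<exists>\<Gamma>'. subst_split k v \<Gamma>\<^sub>u \<Gamma>' \<and> has_ch_type \<Gamma>' u (sum_mset (image_mset fst P))"
  proof (rule has_ch_type_transfer[where R = "subst_split k v",
        OF u _ subst_split_zero subst_split_add])
    fix \<Gamma>' \<tau> assume "has_type \<Gamma>' (subst u k v) \<tau>"
    from App.IH(2)[OF this] show "\<exists>\<Gamma>''. subst_split k v \<Gamma>' \<Gamma>'' \<and> has_type \<Gamma>'' u \<tau>"
      unfolding subst_split_def by blast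
  qed
  then obtain \<Gamma>\<^sub>u' M\<^sub>u \<Delta>\<^sub>u where u':
    "has_ch_type (env_ins k M\<^sub>u \<Gamma>\<^sub>u') u (sum_mset (image_mset fst P))"
    "\<Gamma>\<^sub>u = \<Gamma>\<^sub>u' + \<Delta>\<^sub>u" "mtyped \<Delta>\<^sub>u v M\<^sub>u"
    unfolding subst_split_def by blast
  obtain \<Gamma>\<^sub>r' M\<^sub>r \<Delta>\<^sub>r where "has_type (env_ins (Suc k) M\<^sub>r \<Gamma>\<^sub>r') r \<sigma>"
    and "econs (image_mset snd P) \<Gamma>\<^sub>r = \<Gamma>\<^sub>r' + \<Delta>\<^sub>r" and "mtyped \<Delta>\<^sub>r (shift 1 0 v) M\<^sub>r"
    using App.IH(3)[OF r] by blast
  note r' = has_type_subst_binderD[OF this]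
  from t'(1) u'(1) r'(1)
  have "has_type (env_ins k (M\<^sub>t + M\<^sub>u + M\<^sub>r) (\<Gamma>\<^sub>t' + \<Gamma>\<^sub>u' + env_del 0 \<Gamma>\<^sub>r')) (App t u r) \<sigma>"
    unfolding env_ins_add by (rule has_type_AppI)
  moreover have "\<Gamma> = (\<Gamma>\<^sub>t' + \<Gamma>\<^sub>u' + env_del 0 \<Gamma>\<^sub>r') + (\<Delta>\<^sub>t + \<Delta>\<^sub>u + env_del 0 \<Delta>\<^sub>r)"
    unfolding \<Gamma> t'(2) u'(2) r'(2) by (simp only: ac_simps)
  moreover have "mtyped (\<Delta>\<^sub>t + \<Delta>\<^sub>u + env_del 0 \<Delta>\<^sub>r) v (M\<^sub>t + M\<^sub>u + M\<^sub>r)"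
    by (intro mtyped_add t'(3) u'(3) r'(3))
  ultimately show ?case by blast
qed

section \<open>Subject expansion\<close>

lemma shift_add: "shift (m + n) k v = shift m k (shift n k v)"
  by (induction v arbitrary: k) auto

lemma shift_0: "shift 0 k v = v"
  by (induction v arbitrary: k) auto

lemma has_type_plug_substD:
  "has_type \<Gamma> (plug D (subst s 0 (shift (depth D) 0 v))) \<tau> \<Longrightarrow>
   \<exists>M \<Gamma>\<^sub>1 \<Gamma>\<^sub>2. has_type \<Gamma>\<^sub>1 (plug D (Lam s)) (Arr M \<tau>) \<and> \<Gamma> = \<Gamma>\<^sub>1 + \<Gamma>\<^sub>2 \<and> mtyped \<Gamma>\<^sub>2 v M"
proof (induction D arbitrary: \<Gamma> \<tau> v)
  case Hole
  then obtain \<Gamma>\<^sub>r M \<Delta> where "has_type (econs M \<Gamma>\<^sub>r) s \<tau>" "\<Gamma> = \<Gamma>\<^sub>r + \<Delta>" "mtyped \<Delta> v M"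
    using has_type_substD[of \<Gamma> s 0 v \<tau>] by (auto simp: shift_0 env_ins_0)
  then show ?case by (auto intro: has_type_has_mtype.abs)
next
  case (LApp t u D)
  have "shift (depth (LApp t u D)) 0 v = shift (depth D) 0 (shift 1 0 v)"
    using shift_add[of "depth D" 1 0 v] by simp
  then obtain P \<Gamma>\<^sub>t \<Gamma>\<^sub>u \<Gamma>\<^sub>r where
    t: "has_ch_type \<Gamma>\<^sub>t t (image_mset (case_prod Arr) P)" and
    u: "has_ch_type \<Gamma>\<^sub>u u (sum_mset (image_mset fst P))" and
    D: "has_type (econs (image_mset snd P) \<Gamma>\<^sub>r)
          (plug D (subst s 0 (shift (depth D) 0 (shift 1 0 v)))) \<tau>" and
    \<Gamma>: "\<Gamma> = \<Gamma>\<^sub>t + \<Gamma>\<^sub>u + \<Gamma>\<^sub>r"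
    using LApp.prems by (auto elim: has_type_AppE)
  from LApp.IH[OF D] obtain M \<Delta>\<^sub>1 \<Delta>\<^sub>2 where \<Delta>\<^sub>1: "has_type \<Delta>\<^sub>1 (plug D (Lam s)) (Arr M \<tau>)"
    and split: "econs (image_mset snd P) \<Gamma>\<^sub>r = \<Delta>\<^sub>1 + \<Delta>\<^sub>2" and v: "mtyped \<Delta>\<^sub>2 (shift 1 0 v) M"
    by blast
  from mtyped_shiftD[OF v] have \<Delta>\<^sub>2: "\<Delta>\<^sub>2 0 = {#}" "mtyped (env_del 0 \<Delta>\<^sub>2) v M" by simp_all
  have "has_type (econs (image_mset snd P) (env_del 0 \<Delta>\<^sub>1)) (plug D (Lam s)) (Arr M \<tau>)"
    using \<Delta>\<^sub>1 econs_eq_addD(1)[OF split \<Delta>\<^sub>2(1)] econs_env_del_0[of \<Delta>\<^sub>1] by simp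
  with t u have "has_type (\<Gamma>\<^sub>t + \<Gamma>\<^sub>u + env_del 0 \<Delta>\<^sub>1) (plug (LApp t u D) (Lam s)) (Arr M \<tau>)"
    unfolding plug.simps by (rule has_type_AppI)
  moreover have "\<Gamma> = (\<Gamma>\<^sub>t + \<Gamma>\<^sub>u + env_del 0 \<Delta>\<^sub>1) + env_del 0 \<Delta>\<^sub>2"
    unfolding \<Gamma> econs_eq_addD(2)[OF split \<Delta>\<^sub>2(1)] by (simp only: ac_simps)
  ultimately show ?case using \<Delta>\<^sub>2(2) by blast
qed

lemma mtyped_plug_substD:
  assumes "mtyped \<Gamma> (plug D (subst s 0 (shift (depth D) 0 v))) A"
  shows "\<exists>P \<Gamma>\<^sub>1 \<Gamma>\<^sub>2. mtyped \<Gamma>\<^sub>1 (plug D (Lam s)) (image_mset (case_prod Arr) P)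
    \<and> mtyped \<Gamma>\<^sub>2 v (sum_mset (image_mset fst P)) \<and> A = image_mset snd P"
proof -
  have "w = plug D (subst s 0 (shift (depth D) 0 v)) \<Longrightarrow> ?thesis" if "mtyped \<Gamma> w A" for w
    using that
  proof (induction rule: mtyped.induct)
    case mtyped_empty
    show ?case by (rule exI[of _ "{#}"]) (auto intro: mtyped.mtyped_empty)
  next
    case (mtyped_single \<Gamma> t \<sigma>)
    then obtain M \<Gamma>\<^sub>1 \<Gamma>\<^sub>2 where "has_type \<Gamma>\<^sub>1 (plug D (Lam s)) (Arr M \<sigma>)" "mtyped \<Gamma>\<^sub>2 v M"
      using has_type_plug_substD by blast
    then show ?case
      by (intro exI[of _ "{#(M, \<sigma>)#}"] exI) (auto intro: mtyped.mtyped_single)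
  next
    case (mtyped_add \<Gamma>\<^sub>1 t A\<^sub>1 \<Gamma>\<^sub>2 A\<^sub>2)
    then obtain P\<^sub>1 \<Gamma>\<^sub>1\<^sub>1 \<Gamma>\<^sub>1\<^sub>2 P\<^sub>2 \<Gamma>\<^sub>2\<^sub>1 \<Gamma>\<^sub>2\<^sub>2 where
      "mtyped \<Gamma>\<^sub>1\<^sub>1 (plug D (Lam s)) (image_mset (case_prod Arr) P\<^sub>1)"
      "mtyped \<Gamma>\<^sub>1\<^sub>2 v (sum_mset (image_mset fst P\<^sub>1))" "A\<^sub>1 = image_mset snd P\<^sub>1"
      "mtyped \<Gamma>\<^sub>2\<^sub>1 (plug D (Lam s)) (image_mset (case_prod Arr) P\<^sub>2)"
      "mtyped \<Gamma>\<^sub>2\<^sub>2 v (sum_mset (image_mset fst P\<^sub>2))" "A\<^sub>2 = image_mset snd P\<^sub>2"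
      by blast
    then have "mtyped (\<Gamma>\<^sub>1\<^sub>1 + \<Gamma>\<^sub>2\<^sub>1) (plug D (Lam s)) (image_mset (case_prod Arr) (P\<^sub>1 + P\<^sub>2))"
      and "mtyped (\<Gamma>\<^sub>1\<^sub>2 + \<Gamma>\<^sub>2\<^sub>2) v (sum_mset (image_mset fst (P\<^sub>1 + P\<^sub>2)))"
      and "A\<^sub>1 + A\<^sub>2 = image_mset snd (P\<^sub>1 + P\<^sub>2)"
      unfolding image_mset_union sum_mset.union by (blast intro: mtyped.mtyped_add)+
    then show ?case by blast
  qed
  then show ?thesis using assms by blast
qed

definition typable :: "trm \<Rightarrow> bool" where
  "typable t \<longleftrightarrow> (\<exists>\<Gamma> \<sigma>. has_type \<Gamma> t \<sigma>)"

definition flexible :: "trm \<Rightarrow> bool" where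
  "flexible t \<longleftrightarrow> (\<forall>\<sigma>. \<exists>\<Gamma>. has_type \<Gamma> t \<sigma>)"

lemma flexible_imp_typable: "flexible t \<Longrightarrow> typable t"
  unfolding flexible_def typable_def by blast

lemma has_ch_type_if_mtyped: "mtyped \<Gamma> t M \<Longrightarrow> typable t \<Longrightarrow> \<exists>\<Gamma>'. has_ch_type \<Gamma>' t M"
  unfolding has_ch_type_iff typable_def by (cases "M = {#}") auto

lemma flexible_imp_mtyped: "flexible t \<Longrightarrow> \<exists>\<Gamma>. mtyped \<Gamma> t A"
proof (induction A)
  case empty
  then show ?case using mtyped_empty by blast
next
  case (add \<sigma> A)
  then obtain \<Gamma> \<Delta> where "has_type \<Gamma> t \<sigma>" "mtyped \<Delta> t A"
    unfolding flexible_def by blast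
  then show ?case using mtyped_add[OF mtyped_single] by fastforce
qed

lemma has_type_App_root_expand:
  assumes "typable (plug D (Lam s))" "typable u"
    and "has_type \<Gamma> (subst r 0 (plug D (subst s 0 (shift (depth D) 0 u)))) \<sigma>"
  shows "\<exists>\<Gamma>'. has_type \<Gamma>' (App (plug D (Lam s)) u r) \<sigma>"
proof -
  obtain \<Gamma>\<^sub>r N \<Delta> where r: "has_type (econs N \<Gamma>\<^sub>r) r \<sigma>"
    and "mtyped \<Delta> (plug D (subst s 0 (shift (depth D) 0 u))) N"
    using has_type_substD[OF assms(3)] by (auto simp: env_ins_0)
  then obtain P \<Gamma>\<^sub>1 \<Gamma>\<^sub>2 where "mtyped \<Gamma>\<^sub>1 (plug D (Lam s)) (image_mset (case_prod Arr) P)"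
    "mtyped \<Gamma>\<^sub>2 u (sum_mset (image_mset fst P))" and N: "N = image_mset snd P"
    using mtyped_plug_substD by blast
  with assms(1,2) obtain \<Gamma>\<^sub>1' \<Gamma>\<^sub>2' where
    "has_ch_type \<Gamma>\<^sub>1' (plug D (Lam s)) (image_mset (case_prod Arr) P)"
    "has_ch_type \<Gamma>\<^sub>2' u (sum_mset (image_mset fst P))"
    using has_ch_type_if_mtyped by meson
  with r N show ?thesis using has_type_AppI by blast
qed

text \<open>Type \<open>t\<close> with \<open>[] \<rightarrow> \<tau>\<close> for each \<open>\<tau>\<close> in \<open>\<Gamma> 0\<close>; then \<open>u\<close> is only needed at \<open>ch([])\<close>.\<close>

lemma has_type_App_flexible_head:
  assumes "flexible t" "typable u" "has_type \<Gamma> r \<sigma>"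
  shows "\<exists>\<Gamma>'. has_type \<Gamma>' (App t u r) \<sigma>"
proof -
  let ?P = "image_mset (Pair {#}) (\<Gamma> 0)"
  obtain \<Gamma>\<^sub>t where "mtyped \<Gamma>\<^sub>t t (image_mset (case_prod Arr) ?P)"
    using flexible_imp_mtyped[OF assms(1)] by blast
  then obtain \<Gamma>\<^sub>t' where t: "has_ch_type \<Gamma>\<^sub>t' t (image_mset (case_prod Arr) ?P)"
    using has_ch_type_if_mtyped flexible_imp_typable[OF assms(1)] by blast
  obtain \<Gamma>\<^sub>u \<tau> where "has_type \<Gamma>\<^sub>u u \<tau>" using assms(2) unfolding typable_def by blast
  then have u: "has_ch_type \<Gamma>\<^sub>u u (sum_mset (image_mset fst ?P))"
    unfolding has_ch_type_iff by (auto simp: multiset.map_comp o_def)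
  have r: "has_type (econs (image_mset snd ?P) (env_del 0 \<Gamma>)) r \<sigma>"
    using assms(3) by (simp add: multiset.map_comp o_def econs_env_del_0)
  show ?thesis using has_type_AppI[OF t u r] by blast
qed

lemma has_type_App_left_expand:
  assumes "has_type \<Gamma> (App t' u r) \<sigma>"
    and "\<And>\<Gamma> \<tau>. has_type \<Gamma> t' \<tau> \<Longrightarrow> \<exists>\<Gamma>'. has_type \<Gamma>' t \<tau>"
  shows "\<exists>\<Gamma>'. has_type \<Gamma>' (App t u r) \<sigma>"
proof -
  obtain P \<Gamma>\<^sub>t \<Gamma>\<^sub>u \<Gamma>\<^sub>r where t': "has_ch_type \<Gamma>\<^sub>t t' (image_mset (case_prod Arr) P)"
    and u: "has_ch_type \<Gamma>\<^sub>u u (sum_mset (image_mset fst P))"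
    and r: "has_type (econs (image_mset snd P) \<Gamma>\<^sub>r) r \<sigma>"
    using assms(1) by (rule has_type_AppE)
  have "\<exists>\<Gamma>'. True \<and> has_ch_type \<Gamma>' t (image_mset (case_prod Arr) P)"
    by (rule has_ch_type_transfer[OF t']) (use assms(2) in auto)
  then show ?thesis using has_type_AppI[OF _ u r] by blast
qed

text \<open>A step may erase the abstraction \<open>D\<langle>\<lambda>x.s\<rangle>\<close> or the argument \<open>u\<close> of the redex it
  contracts, and then anti-substitution yields no typing for them; hence both must be typable.
  Likewise a step in \<open>r\<close> is only safe under a head that can meet any demand of \<open>r\<close> on \<open>y\<close>.\<close>

inductive safe_step :: "trm \<Rightarrow> trm \<Rightarrow> bool" where
  safe_root: "typable (plug D (Lam s)) \<Longrightarrow> typable u \<Longrightarrow>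
    safe_step (App (plug D (Lam s)) u r) (subst r 0 (plug D (subst s 0 (shift (depth D) 0 u))))"
| safe_left: "safe_step t t' \<Longrightarrow> safe_step (App t u r) (App t' u r)"
| safe_right: "flexible t \<Longrightarrow> typable u \<Longrightarrow> safe_step r r' \<Longrightarrow> safe_step (App t u r) (App t u r')"

lemma safe_step_dbeta: "safe_step t t' \<Longrightarrow> dbeta t t'"
  by (induction rule: safe_step.induct) (auto intro: dbeta.intros)

lemma safe_step_expand: "safe_step t t' \<Longrightarrow> has_type \<Gamma>' t' \<sigma> \<Longrightarrow> \<exists>\<Gamma>. has_type \<Gamma> t \<sigma>"
proof (induction arbitrary: \<Gamma>' \<sigma> rule: safe_step.induct)
  case safe_root
  then show ?case by (rule has_type_App_root_expand)
next
  case safe_left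
  then show ?case using has_type_App_left_expand by blast
next
  case (safe_right t u r r')
  then show ?case using has_type_App_flexible_head by (blast elim: has_type_AppE)
qed

section \<open>Neutral terms and the completeness induction\<close>

definition answer :: "trm \<Rightarrow> bool" where
  "answer t \<longleftrightarrow> (\<exists>D s. t = plug D (Lam s))"

definition neutral :: "trm \<Rightarrow> bool" where
  "neutral t \<longleftrightarrow> (\<forall>w. dbeta\<^sup>*\<^sup>* t w \<longrightarrow> \<not> answer w)"

lemma answer_Lam: "answer (Lam s)"
  unfolding answer_def by (metis plug.simps(1))

lemma answer_App_iff: "answer (App t u r) \<longleftrightarrow> answer r"
proof
  assume "answer (App t u r)"
  then obtain D s where "App t u r = plug D (Lam s)" unfolding answer_def by blast
  then show "answer r" unfolding answer_def by (cases D) auto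
next
  assume "answer r"
  then obtain D s where "App t u r = plug (LApp t u D) (Lam s)" unfolding answer_def by auto
  then show "answer (App t u r)" unfolding answer_def by blast
qed

lemma neutral_dbeta: "neutral t \<Longrightarrow> dbeta t t' \<Longrightarrow> neutral t'"
  unfolding neutral_def by (meson converse_rtranclp_into_rtranclp)

lemma neutral_Var: "neutral (Var x)"
proof -
  have "dbeta\<^sup>*\<^sup>* (Var x) w \<Longrightarrow> w = Var x" for w
    by (induction rule: rtranclp_induct) (auto elim: dbeta.cases)
  moreover have "\<not> answer (Var x)"
    unfolding answer_def by (metis plug.elims trm.distinct(1,3))
  ultimately show ?thesis unfolding neutral_def by blast
qed

lemma neutral_App_rightD: "neutral (App t u r) \<Longrightarrow> neutral r"
proof -
  have "dbeta\<^sup>*\<^sup>* r w \<Longrightarrow> dbeta\<^sup>*\<^sup>* (App t u r) (App t u w)" for w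
    by (induction rule: rtranclp_induct) (auto intro: rtranclp.rtrancl_into_rtrancl dbeta.app3)
  then show "neutral (App t u r) \<Longrightarrow> neutral r"
    unfolding neutral_def using answer_App_iff by blast
qed

lemma dbeta_rtranclp_App_neutral_head:
  assumes "dbeta\<^sup>*\<^sup>* (App t u r) w" "neutral t"
  shows "\<exists>t' u' r'. w = App t' u' r' \<and> dbeta\<^sup>*\<^sup>* t t' \<and> dbeta\<^sup>*\<^sup>* r r'"
  using assms(1)
proof (induction rule: rtranclp_induct)
  case (step y z)
  then obtain t' u' r' where y: "y = App t' u' r'" "dbeta\<^sup>*\<^sup>* t t'" "dbeta\<^sup>*\<^sup>* r r'"
    by blast
  from step(2)[unfolded y(1)] show ?case
  proof cases
    case root
    then have "answer t'" unfolding answer_def by blast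
    then show ?thesis using assms(2) y(2) unfolding neutral_def by blast
  qed (use y in \<open>blast intro: rtranclp.rtrancl_into_rtrancl\<close>)+
qed blast

lemma neutral_AppI: "neutral t \<Longrightarrow> neutral r \<Longrightarrow> neutral (App t u r)"
  by (metis answer_App_iff dbeta_rtranclp_App_neutral_head neutral_def)

text \<open>The invariant must include flexibility: a neutral head has to match whatever types the
  body of the generalized application assigns to its bound variable.\<close>

definition typable_inv :: "trm \<Rightarrow> bool" where
  "typable_inv t \<longleftrightarrow> typable t \<and> (neutral t \<longrightarrow> flexible t)"

lemma typable_inv_Var: "typable_inv (Var x)"
  unfolding typable_inv_def typable_def flexible_def by (blast intro: has_type_has_mtype.var)

lemma typable_inv_Lam: "typable_inv s \<Longrightarrow> typable_inv (Lam s)"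
proof -
  assume "typable_inv s"
  then obtain \<Gamma> \<sigma> where "has_type (econs (\<Gamma> 0) (env_del 0 \<Gamma>)) s \<sigma>"
    unfolding typable_inv_def typable_def econs_env_del_0 by blast
  then have "typable (Lam s)"
    unfolding typable_def by (blast intro: has_type_has_mtype.abs)
  moreover have "\<not> neutral (Lam s)"
    unfolding neutral_def using answer_Lam by blast
  ultimately show ?thesis unfolding typable_inv_def by blast
qed

lemma typable_inv_App_neutral_head:
  assumes "neutral t" "typable_inv t" "typable_inv u" "typable_inv r"
  shows "typable_inv (App t u r)"
proof -
  have t: "flexible t" and u: "typable u"
    using assms unfolding typable_inv_def by blast+
  have "typable (App t u r)"
    using assms(4) has_type_App_flexible_head[OF t u] unfolding typable_inv_def typable_def by blast
  moreover have "flexible (App t u r)" if "neutral (App t u r)"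
    using neutral_App_rightD[OF that] assms(4) has_type_App_flexible_head[OF t u]
    unfolding typable_inv_def flexible_def by blast
  ultimately show ?thesis unfolding typable_inv_def by blast
qed

lemma typable_inv_safe_step_expand: "safe_step t t' \<Longrightarrow> typable_inv t' \<Longrightarrow> typable_inv t"
  unfolding typable_inv_def typable_def flexible_def
  by (metis safe_step_expand neutral_dbeta safe_step_dbeta)

inductive subterm :: "trm \<Rightarrow> trm \<Rightarrow> bool" where
  subterm_refl: "subterm t t"
| subterm_Lam: "subterm s t \<Longrightarrow> subterm s (Lam t)"
| subterm_App1: "subterm s t \<Longrightarrow> subterm s (App t u r)"
| subterm_App2: "subterm s u \<Longrightarrow> subterm s (App t u r)"
| subterm_App3: "subterm s r \<Longrightarrow> subterm s (App t u r)"

lemma subterm_trans: "subterm s t \<Longrightarrow> subterm x s \<Longrightarrow> subterm x t"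
  by (induction rule: subterm.induct) (auto intro: subterm.intros)

lemma subterm_size: "subterm s t \<Longrightarrow> s = t \<or> size s < size t"
  by (induction rule: subterm.induct) auto

lemma subterm_App_strict:
  assumes "subterm x t \<or> subterm x u \<or> subterm x r"
  shows "subterm x (App t u r)" "x \<noteq> App t u r"
proof -
  show "subterm x (App t u r)" using assms by (auto intro: subterm.intros)
  have "size x < size (App t u r)" using assms subterm_size by fastforce
  then show "x \<noteq> App t u r" by auto
qed

lemma subterm_dbeta: "subterm s t \<Longrightarrow> dbeta s s' \<Longrightarrow> \<exists>t'. dbeta t t' \<and> subterm s' t'"
  by (induction rule: subterm.induct) (auto intro: subterm.intros dbeta.intros)

lemma safe_step_exists:
  "\<forall>x. subterm x t \<and> x \<noteq> t \<longrightarrow> typable_inv x \<Longrightarrow> \<not> neutral t \<Longrightarrow> \<not> answer t \<Longrightarrow>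
   \<exists>t'. safe_step t t'"
proof (induction t)
  case (Var x)
  then show ?case using neutral_Var by blast
next
  case (Lam t)
  then show ?case using answer_Lam by blast
next
  case (App t u r)
  have sub: "typable_inv x" if "subterm x t \<or> subterm x u \<or> subterm x r" for x
    using App.prems(1) subterm_App_strict[OF that] by blast
  consider "answer t" | "\<not> answer t" "\<not> neutral t" | "neutral t" by blast
  then show ?case
  proof cases
    case 1
    then show ?thesis
      using sub[of t] sub[of u] unfolding answer_def typable_inv_def
      by (blast intro: subterm_refl safe_root)
  next
    case 2
    then obtain t' where "safe_step t t'"
      using App.IH(1) sub subterm_trans by blast
    then show ?thesis by (blast intro: safe_left)
  next
    case 3
    have "\<not> answer r" using App.prems(3) answer_App_iff by blast
    moreover have "\<not> neutral r" using App.prems(2) neutral_AppI[OF 3] by blast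
    ultimately obtain r' where "safe_step r r'"
      using App.IH(3) sub subterm_trans by blast
    moreover have "flexible t" "typable u"
      using 3 sub[of t] sub[of u] unfolding typable_inv_def by (blast intro: subterm_refl)+
    ultimately show ?thesis by (blast intro: safe_right)
  qed
qed

lemma safe_step_App_exists:
  assumes "\<not> neutral t" "\<forall>x. subterm x (App t u r) \<and> x \<noteq> App t u r \<longrightarrow> typable_inv x"
  shows "\<exists>t'. safe_step (App t u r) t'"
proof (cases "answer t")
  case True
  have "typable t" "typable u"
    using assms(2) subterm_App_strict subterm_refl unfolding typable_inv_def by blast+
  with True show ?thesis unfolding answer_def by (blast intro: safe_root)
next
  case False
  have "\<forall>x. subterm x t \<and> x \<noteq> t \<longrightarrow> typable_inv x"
    using assms(2) subterm_App_strict by blast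
  then obtain t' where "safe_step t t'"
    using safe_step_exists False assms(1) by blast
  then show ?thesis by (blast intro: safe_left)
qed

definition reduct_or_subterm :: "trm \<Rightarrow> trm \<Rightarrow> bool" where
  "reduct_or_subterm s t \<longleftrightarrow> dbeta t s \<or> (subterm s t \<and> s \<noteq> t)"

lemma typable_inv_if_accp: "Wellfounded.accp reduct_or_subterm t \<Longrightarrow> typable_inv t"
proof (induction rule: accp.induct)
  case (accI t)
  then have sub: "typable_inv x" if "subterm x t" "x \<noteq> t" for x
    using that unfolding reduct_or_subterm_def by blast
  show ?case
  proof (cases t)
    case (Var x)
    then show ?thesis by (simp add: typable_inv_Var)
  next
    case (Lam s)
    then show ?thesis using sub[of s] by (simp add: subterm.intros typable_inv_Lam)
  next
    case (App a b c)
    have inv: "typable_inv a" "typable_inv b" "typable_inv c"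
      using sub subterm_App_strict subterm_refl unfolding App by blast+
    show ?thesis
    proof (cases "neutral a")
      case True
      then show ?thesis unfolding App using inv by (rule typable_inv_App_neutral_head)
    next
      case False
      then obtain t' where "safe_step t t'"
        using sub safe_step_App_exists unfolding App by blast
      moreover have "typable_inv t'"
        using accI.IH safe_step_dbeta[OF \<open>safe_step t t'\<close>] unfolding reduct_or_subterm_def by blast
      ultimately show ?thesis by (rule typable_inv_safe_step_expand)
    qed
  qed
qed

lemma SN_dbeta_accp: "SN_dbeta t \<Longrightarrow> Wellfounded.accp (\<lambda>x y. dbeta y x) t"
proof (rule ccontr)
  assume SN: "SN_dbeta t" and "\<not> Wellfounded.accp (\<lambda>x y. dbeta y x) t"
  then have "\<exists>f. \<forall>n. (\<not> Wellfounded.accp (\<lambda>x y. dbeta y x) (f n) \<and> (n = 0 \<longrightarrow> f n = t))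
      \<and> dbeta (f n) (f (Suc n))"
    by (intro dependent_nat_choice) (auto elim: not_accp_down)
  then show False using SN unfolding SN_dbeta_def by blast
qed

lemma accp_reduct_or_subterm:
  assumes "Wellfounded.accp (\<lambda>x y. dbeta y x) t" "subterm s t"
  shows "Wellfounded.accp reduct_or_subterm s"
  using assms
proof (induction arbitrary: s rule: accp.induct)
  case (accI t)
  show ?case using accI.prems
  proof (induction s rule: measure_induct_rule[of size])
    case (less s)
    show ?case
    proof (rule accp.accI)
      fix y assume "reduct_or_subterm y s"
      then consider "dbeta s y" | "subterm y s" "y \<noteq> s"
        unfolding reduct_or_subterm_def by blast
      then show "Wellfounded.accp reduct_or_subterm y"
      proof cases
        case 1
        then show ?thesis using subterm_dbeta[OF less.prems] accI.IH by blast
      next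
        case 2
        then show ?thesis using less subterm_size subterm_trans by blast
      qed
    qed
  qed
qed

theorem mainTheorem13:
  assumes "SN_dbeta t"
  shows "\<exists>\<Gamma> \<sigma>. has_type \<Gamma> t \<sigma>"
proof -
  have "Wellfounded.accp reduct_or_subterm t"
    using accp_reduct_or_subterm[OF SN_dbeta_accp[OF assms] subterm_refl] .
  then have "typable_inv t" by (rule typable_inv_if_accp)
  then show ?thesis unfolding typable_inv_def typable_def by blast
qed

end
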